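(* Let $(\theta,\varphi,m\colon C_2\to C_1)$ be an involutive-2-link in a category $\mathcal{C}$. Then $(\theta,\varphi,m)$ arises from an internal groupoid (i.e., there is an internal groupoid $(C_0,C_1,C_2,d,c,e,m,\pi_1,\pi_2,i)$ with this same $m$ such that $\theta=\langle i\pi_1,m\rangle$ and $\varphi=\langle m,i\pi_2\rangle$) if and only if all of the following hold: (1) the pairs $(m,m\theta)$ and $(m,m\varphi)$ are each jointly monomorphic; (2) there exist morphisms $e_1,e_2\colon C_1\to C_2$ such that $me_1=1_{C_1}=me_2$; $\theta e_2=e_2$ and $\varphi e_1=e_1$; $m\theta\varphi e_2=m\varphi\theta e_1$; $m\theta e_1 m\varphi=m\varphi e_2 m\theta$; $m\theta e_1 m=m\theta e_1 m\theta$ and $m\varphi e_2 m=m\varphi e_2 m\varphi$; (3) writing $\pi_1=m\varphi$ and $\pi_2=m\theta$, the pair $(\pi_1,\pi_2)$ is bi-exact, i.e. there exist an object $C_0$ and morphisms $d,c\colon C_1\to C_0$ with $d\pi_1=c\pi_2$ such that this square is both a pullback and a pushout, and there exist an object $C_3$ and morphisms $p_1,p_2\colon C_3\to C_2$ with $\pi_2p_1=\pi_1p_2$ such that this square is both a pullback and a pushout; (4) there exist morphisms $m_1,m_2\colon C_3\to C_2$ with $\pi_1m_1=mp_1$, $\pi_2m_1=\pi_2p_2$, $\pi_1m_2=\pi_1p_1$, $\pi_2m_2=mp_2$ (these are unique since $(\pi_1,\pi_2)$ is jointly monomorphic), and they satisfy $mm_1=mm_2$.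
   Context: No limits or colimits are assumed to exist in $\mathcal{C}$; pullbacks and pushouts are properties of commutative squares. A pair of morphisms with common domain is jointly monomorphic if any two morphisms into that domain agreeing after composition with each of them are equal. Notation: for $x,y\colon X\to C_1$ with $dx=cy$, $\langle x,y\rangle\colon X\to C_2$ is the unique morphism with $\pi_1\langle x,y\rangle=x$, $\pi_2\langle x,y\rangle=y$. Internal groupoid in a category $\mathcal{C}$: objects $C_0,C_1,C_2$ and morphisms $d,c\colon C_1\to C_0$, $e\colon C_0\to C_1$, $m,\pi_1,\pi_2\colon C_2\to C_1$, $i\colon C_1\to C_1$ such that: $de=1_{C_0}=ce$; $dm=d\pi_2$, $cm=c\pi_1$, $d\pi_1=c\pi_2$; $di=c$, $ci=d$, $i^2=1_{C_1}$, $ie=e$; the commutative square $d\pi_1=c\pi_2$ is a pullback square; $m\langle 1_{C_1},ed\rangle=1_{C_1}=m\langle ec,1_{C_1}\rangle$; $m\langle 1_{C_1},i\rangle=ec$ and $m\langle i,1_{C_1}\rangle=ed$; the cospan $d\pi_2\colon C_2\to C_0$, $c\colon C_1\to C_0$ can be completed to a pullback square $d\pi_2 p_1=c\,p_2$ with $p_1\colon C_3\to C_2$, $p_2\colon C_3\to C_1$; and $m(1\times m)=m(m\times 1)$, where $m\times 1=\langle mp_1,p_2\rangle$ and $1\times m=\langle \pi_1p_1, m\langle\pi_2p_1,p_2\rangle\rangle$. Involutive-2-link: a triple $(\theta,\varphi,m)$ where $m\colon A\to B$ is a morphism and $\theta,\varphi\colon A\to A$ satisfy $\theta^2=\varphi^2=1_A$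 and $\theta\varphi\theta=\varphi\theta\varphi$, and such that $m,m\theta,m\varphi\colon A\to B$ are jointly monomorphic. *)

theory Defs
  imports Main
begin

text \<open>A category is given by its morphisms (elements of type 'm), objects (type 'o),
  domain, codomain, composition (Cmp C g f = g after f, meaningful when Dom g = Cod f)
  and identities.\<close>

record ('o, 'm) cat =
  Dom :: "'m \<Rightarrow> 'o"
  Cod :: "'m \<Rightarrow> 'o"
  Cmp :: "'m \<Rightarrow> 'm \<Rightarrow> 'm"
  Idn :: "'o \<Rightarrow> 'm"

definition category :: "('o, 'm) cat \<Rightarrow> bool" where
  "category C \<longleftrightarrow>
     (\<forall>X. Dom C (Idn C X) = X \<and> Cod C (Idn C X) = X) \<and>
     (\<forall>f g. Dom C g = Cod C f \<longrightarrow>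
        Dom C (Cmp C g f) = Dom C f \<and> Cod C (Cmp C g f) = Cod C g) \<and>
     (\<forall>f. Cmp C f (Idn C (Dom C f)) = f \<and> Cmp C (Idn C (Cod C f)) f = f) \<and>
     (\<forall>f g h. Dom C g = Cod C f \<and> Dom C h = Cod C g \<longrightarrow>
        Cmp C h (Cmp C g f) = Cmp C (Cmp C h g) f)"

definition hom :: "('o, 'm) cat \<Rightarrow> 'm \<Rightarrow> 'o \<Rightarrow> 'o \<Rightarrow> bool" where
  "hom C f X Y \<longleftrightarrow> Dom C f = X \<and> Cod C f = Y"

definition jointly_mono :: "('o, 'm) cat \<Rightarrow> 'o \<Rightarrow> 'm list \<Rightarrow> bool" where
  "jointly_mono C A fs \<longleftrightarrow> (\<forall>f\<in>set fs. Dom C f = A) \<and>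
     (\<forall>x y. Cod C x = A \<and> Cod C y = A \<and> Dom C x = Dom C y \<and>
        (\<forall>f\<in>set fs. Cmp C f x = Cmp C f y) \<longrightarrow> x = y)"

definition square :: "('o, 'm) cat \<Rightarrow> 'm \<Rightarrow> 'm \<Rightarrow> 'm \<Rightarrow> 'm \<Rightarrow> bool" where
  "square C f1 f2 g1 g2 \<longleftrightarrow> Dom C f1 = Dom C f2 \<and> Cod C f1 = Dom C g1 \<and>
     Cod C f2 = Dom C g2 \<and> Cod C g1 = Cod C g2 \<and> Cmp C g1 f1 = Cmp C g2 f2"

definition is_pullback :: "('o, 'm) cat \<Rightarrow> 'm \<Rightarrow> 'm \<Rightarrow> 'm \<Rightarrow> 'm \<Rightarrow> bool" where
  "is_pullback C f1 f2 g1 g2 \<longleftrightarrow> square C f1 f2 g1 g2 \<and>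
     (\<forall>h1 h2. Dom C h1 = Dom C h2 \<and> Cod C h1 = Dom C g1 \<and> Cod C h2 = Dom C g2 \<and>
        Cmp C g1 h1 = Cmp C g2 h2 \<longrightarrow>
        (\<exists>!u. Dom C u = Dom C h1 \<and> Cod C u = Dom C f1 \<and>
              Cmp C f1 u = h1 \<and> Cmp C f2 u = h2))"

definition is_pushout :: "('o, 'm) cat \<Rightarrow> 'm \<Rightarrow> 'm \<Rightarrow> 'm \<Rightarrow> 'm \<Rightarrow> bool" where
  "is_pushout C f1 f2 g1 g2 \<longleftrightarrow> square C f1 f2 g1 g2 \<and>
     (\<forall>k1 k2. Dom C k1 = Cod C f1 \<and> Dom C k2 = Cod C f2 \<and> Cod C k1 = Cod C k2 \<and>
        Cmp C k1 f1 = Cmp C k2 f2 \<longrightarrow>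
        (\<exists>!u. Dom C u = Cod C g1 \<and> Cod C u = Cod C k1 \<and>
              Cmp C u g1 = k1 \<and> Cmp C u g2 = k2))"

definition pairing :: "('o, 'm) cat \<Rightarrow> 'm \<Rightarrow> 'm \<Rightarrow> 'm \<Rightarrow> 'm \<Rightarrow> 'm" where
  "pairing C p1 p2 x y = (THE u. Dom C u = Dom C x \<and> Cod C u = Dom C p1 \<and>
      Cmp C p1 u = x \<and> Cmp C p2 u = y)"

definition internal_groupoid :: "('o, 'm) cat \<Rightarrow> 'o \<Rightarrow> 'o \<Rightarrow> 'o \<Rightarrow>
    'm \<Rightarrow> 'm \<Rightarrow> 'm \<Rightarrow> 'm \<Rightarrow> 'm \<Rightarrow> 'm \<Rightarrow> 'm \<Rightarrow> bool" where
  "internal_groupoid C C0 C1 C2 d c e m p1 p2 i \<longleftrightarrow>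
     hom C d C1 C0 \<and> hom C c C1 C0 \<and> hom C e C0 C1 \<and>
     hom C m C2 C1 \<and> hom C p1 C2 C1 \<and> hom C p2 C2 C1 \<and> hom C i C1 C1 \<and>
     Cmp C d e = Idn C C0 \<and> Cmp C c e = Idn C C0 \<and>
     Cmp C d m = Cmp C d p2 \<and> Cmp C c m = Cmp C c p1 \<and> Cmp C d p1 = Cmp C c p2 \<and>
     Cmp C d i = c \<and> Cmp C c i = d \<and> Cmp C i i = Idn C C1 \<and> Cmp C i e = e \<and>
     is_pullback C p1 p2 d c \<and>
     Cmp C m (pairing C p1 p2 (Idn C C1) (Cmp C e d)) = Idn C C1 \<and>
     Cmp C m (pairing C p1 p2 (Cmp C e c) (Idn C C1)) = Idn C C1 \<and>
     Cmp C m (pairing C p1 p2 (Idn C C1) i) = Cmp C e c \<and>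
     Cmp C m (pairing C p1 p2 i (Idn C C1)) = Cmp C e d \<and>
     (\<exists>C3 q1 q2. hom C q1 C3 C2 \<and> hom C q2 C3 C1 \<and>
        is_pullback C q1 q2 (Cmp C d p2) c \<and>
        Cmp C m (pairing C p1 p2 (Cmp C p1 q1)
                   (Cmp C m (pairing C p1 p2 (Cmp C p2 q1) q2)))
        = Cmp C m (pairing C p1 p2 (Cmp C m q1) q2))"

definition involutive_2_link :: "('o, 'm) cat \<Rightarrow> 'o \<Rightarrow> 'o \<Rightarrow> 'm \<Rightarrow> 'm \<Rightarrow> 'm \<Rightarrow> bool" where
  "involutive_2_link C A B \<theta> \<phi> m \<longleftrightarrow>
     hom C m A B \<and> hom C \<theta> A A \<and> hom C \<phi> A A \<and>
     Cmp C \<theta> \<theta> = Idn C A \<and> Cmp C \<phi> \<phi> = Idn C A \<and>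
     Cmp C \<theta> (Cmp C \<phi> \<theta>) = Cmp C \<phi> (Cmp C \<theta> \<phi>) \<and>
     jointly_mono C A [m, Cmp C m \<theta>, Cmp C m \<phi>]"

end

theory Submission
  imports Defs
begin

(* Write f g for m<f, g> when d f = c g.  In an internal groupoid, \<theta> = <i p1, m> and
   \<phi> = <m, i p2> are the shears (f, g) \<mapsto> (f\<inverse>, f g) and (f, g) \<mapsto> (f g, g\<inverse>), so m \<theta> = p2 and
   m \<phi> = p1.  A pair is determined by its composite and either component, which is (1); the
   sections of (2) are <1, e d> and <e c, 1>; both squares of (3) are pullbacks of split epimorphisms
   and hence pushouts; and the square of composable triples comes from the groupoid's one by
   pullback pasting.
   Conversely, the pushout property of d, c yields e with e d = m \<theta> e1 and e c = m \<phi> e2, and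
   i = m \<theta> \<phi> e2 serves as inverse.  Conditions (2) and (4) make m a unital, invertible and associative
   composition of generalized elements of C1, which is the internal groupoid structure; \<theta> and \<phi>
   are then identified with the shears by cancellation. *)

locale category_ctx =
  fixes C :: "('o, 'm) cat"
  assumes category: "category C"
begin

abbreviation comp :: "'m \<Rightarrow> 'm \<Rightarrow> 'm" (infixr "\<cdot>" 70)
  where "g \<cdot> f \<equiv> Cmp C g f"

lemma dom_Idn [simp]: "Dom C (Idn C X) = X"
  and cod_Idn [simp]: "Cod C (Idn C X) = X"
  using category unfolding category_def by auto

lemma dom_comp [simp]: "Dom C g = Cod C f \<Longrightarrow> Dom C (g \<cdot> f) = Dom C f"
  and cod_comp [simp]: "Dom C g = Cod C f \<Longrightarrow> Cod C (g \<cdot> f) = Cod C g"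
  using category unfolding category_def by auto

lemma comp_Idn_right [simp]: "Dom C f = X \<Longrightarrow> f \<cdot> Idn C X = f"
  and comp_Idn_left [simp]: "Cod C f = X \<Longrightarrow> Idn C X \<cdot> f = f"
  using category unfolding category_def by auto

lemma comp_assoc [simp]:
  "Dom C g = Cod C f \<Longrightarrow> Dom C h = Cod C g \<Longrightarrow> (h \<cdot> g) \<cdot> f = h \<cdot> (g \<cdot> f)"
  using category unfolding category_def by metis

lemma comp_reduce:
  "g \<cdot> f = h \<Longrightarrow> Dom C g = Cod C f \<Longrightarrow> Dom C f = Cod C x \<Longrightarrow> g \<cdot> (f \<cdot> x) = h \<cdot> x"
  by (metis comp_assoc)

lemma is_pullbackI:
  assumes "square C f1 f2 g1 g2"
    and "\<And>h1 h2. Dom C h1 = Dom C h2 \<Longrightarrow> Cod C h1 = Dom C g1 \<Longrightarrow> Cod C h2 = Dom C g2 \<Longrightarrow>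
      g1 \<cdot> h1 = g2 \<cdot> h2 \<Longrightarrow> \<exists>u. Dom C u = Dom C h1 \<and> Cod C u = Dom C f1 \<and> f1 \<cdot> u = h1 \<and> f2 \<cdot> u = h2"
    and "\<And>u v. Cod C u = Dom C f1 \<Longrightarrow> Cod C v = Dom C f1 \<Longrightarrow> Dom C u = Dom C v \<Longrightarrow>
      f1 \<cdot> u = f1 \<cdot> v \<Longrightarrow> f2 \<cdot> u = f2 \<cdot> v \<Longrightarrow> u = v"
  shows "is_pullback C f1 f2 g1 g2"
  unfolding is_pullback_def
proof (intro conjI allI impI)
  fix h1 h2
  assume "Dom C h1 = Dom C h2 \<and> Cod C h1 = Dom C g1 \<and> Cod C h2 = Dom C g2 \<and> g1 \<cdot> h1 = g2 \<cdot> h2"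
  then show "\<exists>!u. Dom C u = Dom C h1 \<and> Cod C u = Dom C f1 \<and> f1 \<cdot> u = h1 \<and> f2 \<cdot> u = h2"
    using assms(2)[of h1 h2] assms(3) by metis
qed (fact assms(1))

lemma pushout_mediator:
  assumes "is_pushout C f1 f2 g1 g2" "Dom C k1 = Cod C f1" "Dom C k2 = Cod C f2" "Cod C k1 = Cod C k2"
    "k1 \<cdot> f1 = k2 \<cdot> f2"
  shows "\<exists>!u. Dom C u = Cod C g1 \<and> Cod C u = Cod C k1 \<and> u \<cdot> g1 = k1 \<and> u \<cdot> g2 = k2"
  using assms unfolding is_pushout_def by blast

lemma pushout_eqI:
  assumes po: "is_pushout C f1 f2 g1 g2" and u: "Dom C u = Cod C g1" and v: "Dom C v = Cod C g1"
    and "Cod C u = Cod C v" "u \<cdot> g1 = v \<cdot> g1" "u \<cdot> g2 = v \<cdot> g2"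
  shows "u = v"
proof -
  have sq: "Cod C f1 = Dom C g1" "Cod C f2 = Dom C g2" "Cod C g1 = Cod C g2" "g1 \<cdot> f1 = g2 \<cdot> f2"
    using po unfolding is_pushout_def square_def by auto
  have "\<exists>!w. Dom C w = Cod C g1 \<and> Cod C w = Cod C (u \<cdot> g1) \<and> w \<cdot> g1 = u \<cdot> g1 \<and> w \<cdot> g2 = u \<cdot> g2"
    by (rule pushout_mediator[OF po]) (use sq u in simp_all)
  moreover have "Cod C (u \<cdot> g1) = Cod C u"
    using sq u by simp
  ultimately show ?thesis
    using assms by metis
qed

end

locale pullback_square = category_ctx C for C :: "('o, 'm) cat" +
  fixes P X Y Z and f1 f2 g1 g2
  assumes f1: "hom C f1 P X" and f2: "hom C f2 P Y" and g1: "hom C g1 X Z" and g2: "hom C g2 Y Z"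
    and pullback: "is_pullback C f1 f2 g1 g2"
begin

lemma hom_simps [simp]:
  "Dom C f1 = P" "Cod C f1 = X" "Dom C f2 = P" "Cod C f2 = Y"
  "Dom C g1 = X" "Cod C g1 = Z" "Dom C g2 = Y" "Cod C g2 = Z"
  using f1 f2 g1 g2 unfolding hom_def by auto

lemma commutes: "g1 \<cdot> f1 = g2 \<cdot> f2"
  using pullback unfolding is_pullback_def square_def by blast

lemma commutes_comp: "Cod C x = P \<Longrightarrow> g1 \<cdot> (f1 \<cdot> x) = g2 \<cdot> (f2 \<cdot> x)"
  using comp_reduce[OF commutes, of x] by simp

lemma mediator:
  assumes "Dom C h1 = Dom C h2" "Cod C h1 = X" "Cod C h2 = Y" "g1 \<cdot> h1 = g2 \<cdot> h2"
  shows "\<exists>!u. Dom C u = Dom C h1 \<and> Cod C u = P \<and> f1 \<cdot> u = h1 \<and> f2 \<cdot> u = h2"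
  using pullback assms unfolding is_pullback_def by auto

lemma eqI:
  assumes "Cod C u = P" "Cod C v = P" "Dom C u = Dom C v" "f1 \<cdot> u = f1 \<cdot> v" "f2 \<cdot> u = f2 \<cdot> v"
  shows "u = v"
proof -
  have "\<exists>!w. Dom C w = Dom C (f1 \<cdot> u) \<and> Cod C w = P \<and> f1 \<cdot> w = f1 \<cdot> u \<and> f2 \<cdot> w = f2 \<cdot> u"
    using assms commutes_comp[of u] by (intro mediator) auto
  moreover have "Dom C (f1 \<cdot> u) = Dom C u"
    using assms by simp
  ultimately show ?thesis
    using assms by metis
qed

abbreviation pair :: "'m \<Rightarrow> 'm \<Rightarrow> 'm"
  where "pair x y \<equiv> pairing C f1 f2 x y"

lemma pairing_eq:
  assumes "Cod C u = P" "f1 \<cdot> u = x" "f2 \<cdot> u = y"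
  shows "pair x y = u"
  unfolding pairing_def
proof (rule the_equality)
  show "Dom C u = Dom C x \<and> Cod C u = Dom C f1 \<and> f1 \<cdot> u = x \<and> f2 \<cdot> u = y"
    using assms by auto
qed (use assms eqI in fastforce)

lemma pairing:
  assumes "Dom C x = Dom C y" "Cod C x = X" "Cod C y = Y" "g1 \<cdot> x = g2 \<cdot> y"
  shows "Cod C (pair x y) = P" "Dom C (pair x y) = Dom C x"
    "f1 \<cdot> pair x y = x" "f2 \<cdot> pair x y = y"
  using mediator[OF assms] pairing_eq by metis+

lemma pairing_comp:
  assumes "Dom C x = Dom C y" "Cod C x = X" "Cod C y = Y" "g1 \<cdot> x = g2 \<cdot> y" "Dom C x = Cod C t"
  shows "pair x y \<cdot> t = pair (x \<cdot> t) (y \<cdot> t)"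
proof (rule pairing_eq[symmetric])
  note xy = pairing[OF assms(1-4)]
  show "Cod C (pair x y \<cdot> t) = P" "f1 \<cdot> (pair x y \<cdot> t) = x \<cdot> t" "f2 \<cdot> (pair x y \<cdot> t) = y \<cdot> t"
    using xy assms(5) by (simp_all flip: comp_assoc)
qed

lemma pushout_if_split_epis:
  assumes \<sigma>: "hom C \<sigma> Z X" "g1 \<cdot> \<sigma> = Idn C Z" and \<tau>: "hom C \<tau> Z Y" "g2 \<cdot> \<tau> = Idn C Z"
  shows "is_pushout C f1 f2 g1 g2"
  unfolding is_pushout_def
proof (intro conjI allI impI)
  show "square C f1 f2 g1 g2"
    using pullback unfolding is_pullback_def by blast
  have [simp]: "Dom C \<sigma> = Z" "Cod C \<sigma> = X" "Dom C \<tau> = Z" "Cod C \<tau> = Y"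
    using \<sigma> \<tau> unfolding hom_def by auto
  fix k1 k2
  assume "Dom C k1 = Cod C f1 \<and> Dom C k2 = Cod C f2 \<and> Cod C k1 = Cod C k2 \<and> k1 \<cdot> f1 = k2 \<cdot> f2"
  then have [simp]: "Dom C k1 = X" "Dom C k2 = Y" and k_eq: "k1 \<cdot> f1 = k2 \<cdot> f2"
    by auto
  have agree: "k1 \<cdot> x = k2 \<cdot> y"
    if "Dom C x = Dom C y" "Cod C x = X" "Cod C y = Y" "g1 \<cdot> x = g2 \<cdot> y" for x y
  proof -
    note u = pairing[OF that]
    have "k1 \<cdot> x = k1 \<cdot> (f1 \<cdot> pair x y)"
      using u by simp
    also have "\<dots> = k2 \<cdot> (f2 \<cdot> pair x y)"
      using comp_reduce[OF k_eq, of "pair x y"] u by simp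
    also have "\<dots> = k2 \<cdot> y"
      using u by simp
    finally show ?thesis .
  qed
  \<comment> \<open>testing on the cones \<open>(1, \<tau> g1)\<close>, \<open>(\<sigma> g1, \<tau> g1)\<close>, \<open>(\<sigma> g2, 1)\<close> shows that \<open>k1 \<sigma>\<close> mediates\<close>
  have k1: "k1 = k2 \<cdot> (\<tau> \<cdot> g1)"
    using agree[of "Idn C X" "\<tau> \<cdot> g1"] comp_reduce[OF \<tau>(2), of g1] by simp
  have "k1 \<cdot> (\<sigma> \<cdot> g1) = k2 \<cdot> (\<tau> \<cdot> g1)"
    using agree comp_reduce[OF \<sigma>(2), of g1] comp_reduce[OF \<tau>(2), of g1] by simp
  then have k1_\<sigma>: "(k1 \<cdot> \<sigma>) \<cdot> g1 = k1"
    using k1 by simp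
  have k2_\<sigma>: "(k1 \<cdot> \<sigma>) \<cdot> g2 = k2"
    using agree[of "\<sigma> \<cdot> g2" "Idn C Y"] comp_reduce[OF \<sigma>(2), of g2] by simp
  show "\<exists>!u. Dom C u = Cod C g1 \<and> Cod C u = Cod C k1 \<and> u \<cdot> g1 = k1 \<and> u \<cdot> g2 = k2"
  proof (rule ex1I[of _ "k1 \<cdot> \<sigma>"])
    fix v
    assume "Dom C v = Cod C g1 \<and> Cod C v = Cod C k1 \<and> v \<cdot> g1 = k1 \<and> v \<cdot> g2 = k2"
    then show "v = k1 \<cdot> \<sigma>"
      using comp_reduce[of v g1 k1 \<sigma>] \<sigma>(2) by auto
  qed (use k1_\<sigma> k2_\<sigma> in auto)
qed

lemma pullback_pasting:
  assumes r: "hom C r Q W" and s: "hom C s Q P" and h: "hom C h W X" and left: "h \<cdot> r = f1 \<cdot> s"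
    and left_pullback: "is_pullback C r s h f1"
  shows "is_pullback C r (f2 \<cdot> s) (g1 \<cdot> h) g2"
proof -
  interpret L: pullback_square C Q W P X r s h f1
    using r s h f1 left_pullback by unfold_locales
  show ?thesis
  proof (rule is_pullbackI)
    show "square C r (f2 \<cdot> s) (g1 \<cdot> h) g2"
      unfolding square_def using left commutes_comp[of s] by simp
  next
    fix h1 h2
    assume h12: "Dom C h1 = Dom C h2" "Cod C h1 = Dom C (g1 \<cdot> h)" "Cod C h2 = Dom C g2"
      "(g1 \<cdot> h) \<cdot> h1 = g2 \<cdot> h2"
    then have v: "Cod C (pair (h \<cdot> h1) h2) = P" "Dom C (pair (h \<cdot> h1) h2) = Dom C h1"
      "f1 \<cdot> pair (h \<cdot> h1) h2 = h \<cdot> h1" "f2 \<cdot> pair (h \<cdot> h1) h2 = h2"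
      using pairing[of "h \<cdot> h1" h2] by simp_all
    have "\<exists>!u. Dom C u = Dom C h1 \<and> Cod C u = Q \<and> r \<cdot> u = h1 \<and> s \<cdot> u = pair (h \<cdot> h1) h2"
      using v h12 by (intro L.mediator) simp_all
    then obtain u where u: "Dom C u = Dom C h1" "Cod C u = Q" "r \<cdot> u = h1" "s \<cdot> u = pair (h \<cdot> h1) h2"
      by blast
    show "\<exists>u. Dom C u = Dom C h1 \<and> Cod C u = Dom C r \<and> r \<cdot> u = h1 \<and> (f2 \<cdot> s) \<cdot> u = h2"
      using u v by (intro exI[of _ u]) simp
  next
    fix u v
    assume uv: "Cod C u = Dom C r" "Cod C v = Dom C r" "Dom C u = Dom C v"
      "r \<cdot> u = r \<cdot> v" "(f2 \<cdot> s) \<cdot> u = (f2 \<cdot> s) \<cdot> v"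
    then have uv_cod: "Cod C u = Q" "Cod C v = Q"
      by simp_all
    have "f1 \<cdot> (s \<cdot> u) = h \<cdot> (r \<cdot> u)"
      using comp_reduce[OF left, of u] uv_cod by simp
    also have "\<dots> = f1 \<cdot> (s \<cdot> v)"
      using comp_reduce[OF left, of v] uv_cod uv(4) by simp
    finally have "f1 \<cdot> (s \<cdot> u) = f1 \<cdot> (s \<cdot> v)" .
    moreover have "f2 \<cdot> (s \<cdot> u) = f2 \<cdot> (s \<cdot> v)"
      using uv(5) uv_cod by simp
    ultimately have "s \<cdot> u = s \<cdot> v"
      using uv(3) uv_cod by - (rule eqI, simp_all)
    then show "u = v"
      using uv by - (rule L.eqI, auto)
  qed
qed

lemma pullback_pasting_cancel:
  assumes r: "hom C r Q W" and s: "hom C s Q P" and h: "hom C h W X" and left: "h \<cdot> r = f1 \<cdot> s"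
    and outer_pullback: "is_pullback C r (f2 \<cdot> s) (g1 \<cdot> h) g2"
  shows "is_pullback C r s h f1"
proof -
  have [simp]: "Dom C r = Q" "Cod C r = W" "Dom C s = Q" "Cod C s = P" "Dom C h = W" "Cod C h = X"
    using r s h unfolding hom_def by auto
  interpret O: pullback_square C Q W Y Z r "f2 \<cdot> s" "g1 \<cdot> h" g2
    using r s h f2 g1 g2 outer_pullback by unfold_locales (auto simp: hom_def)
  show ?thesis
  proof (rule is_pullbackI)
    show "square C r s h f1"
      unfolding square_def using left by simp
  next
    fix h1 h2
    assume h12: "Dom C h1 = Dom C h2" "Cod C h1 = Dom C h" "Cod C h2 = Dom C f1" "h \<cdot> h1 = f1 \<cdot> h2"
    then have "g1 \<cdot> (h \<cdot> h1) = g2 \<cdot> (f2 \<cdot> h2)"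
      using commutes_comp[of h2] by simp
    then have "\<exists>!u. Dom C u = Dom C h1 \<and> Cod C u = Q \<and> r \<cdot> u = h1 \<and> (f2 \<cdot> s) \<cdot> u = f2 \<cdot> h2"
      using h12 by (intro O.mediator) simp_all
    then obtain u where u: "Dom C u = Dom C h1" "Cod C u = Q" "r \<cdot> u = h1" "(f2 \<cdot> s) \<cdot> u = f2 \<cdot> h2"
      by blast
    have "s \<cdot> u = h2"
    proof (rule eqI)
      show "f1 \<cdot> (s \<cdot> u) = f1 \<cdot> h2"
        using comp_reduce[OF left, of u] u(2,3) h12(4) by simp
    qed (use u h12 in simp_all)
    then show "\<exists>u. Dom C u = Dom C h1 \<and> Cod C u = Dom C r \<and> r \<cdot> u = h1 \<and> s \<cdot> u = h2"
      using u by (intro exI[of _ u]) simp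
  next
    fix u v
    assume "Cod C u = Dom C r" "Cod C v = Dom C r" "Dom C u = Dom C v" "r \<cdot> u = r \<cdot> v" "s \<cdot> u = s \<cdot> v"
    then show "u = v"
      by - (rule O.eqI, auto)
  qed
qed

end

locale groupoid_structure = category_ctx C for C :: "('o, 'm) cat" +
  fixes C0 C1 C2 d c e m p1 p2 i
  assumes d: "hom C d C1 C0" and c: "hom C c C1 C0" and e: "hom C e C0 C1"
    and m: "hom C m C2 C1" and p1: "hom C p1 C2 C1" and p2: "hom C p2 C2 C1" and i: "hom C i C1 C1"
    and pullback: "is_pullback C p1 p2 d c"
    and d_e: "d \<cdot> e = Idn C C0" and c_e: "c \<cdot> e = Idn C C0"
    and d_m: "d \<cdot> m = d \<cdot> p2" and c_m: "c \<cdot> m = c \<cdot> p1"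
    and d_i: "d \<cdot> i = c" and c_i: "c \<cdot> i = d"
begin

sublocale P: pullback_square C C2 C1 C1 C0 p1 p2 d c
  using d c p1 p2 pullback by unfold_locales

abbreviation mult :: "'m \<Rightarrow> 'm \<Rightarrow> 'm" (infixl "\<odot>" 65)
  where "f \<odot> g \<equiv> m \<cdot> P.pair f g"

lemma hom_simps [simp]:
  "Dom C e = C0" "Cod C e = C1" "Dom C m = C2" "Cod C m = C1" "Dom C i = C1" "Cod C i = C1"
  using e m i unfolding hom_def by auto

lemma comp_simps [simp]:
  "Cod C x = C0 \<Longrightarrow> d \<cdot> (e \<cdot> x) = x" "Cod C x = C0 \<Longrightarrow> c \<cdot> (e \<cdot> x) = x"
  "Cod C y = C2 \<Longrightarrow> d \<cdot> (m \<cdot> y) = d \<cdot> (p2 \<cdot> y)" "Cod C y = C2 \<Longrightarrow> c \<cdot> (m \<cdot> y) = c \<cdot> (p1 \<cdot> y)"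
  "Cod C y = C2 \<Longrightarrow> d \<cdot> (p1 \<cdot> y) = c \<cdot> (p2 \<cdot> y)"
  "Cod C f = C1 \<Longrightarrow> d \<cdot> (i \<cdot> f) = c \<cdot> f" "Cod C f = C1 \<Longrightarrow> c \<cdot> (i \<cdot> f) = d \<cdot> f"
  using comp_reduce[OF d_e, of x] comp_reduce[OF c_e, of x] comp_reduce[OF d_m, of y]
    comp_reduce[OF c_m, of y] P.commutes_comp[of y] comp_reduce[OF d_i, of f] comp_reduce[OF c_i, of f]
  by simp_all

lemmas [simp] = d_e c_e d_m c_m d_i c_i P.commutes

lemma pair_simps [simp]:
  assumes "Dom C f = Dom C g" "Cod C f = C1" "Cod C g = C1" "d \<cdot> f = c \<cdot> g"
  shows "Cod C (P.pair f g) = C2" "Dom C (P.pair f g) = Dom C f"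
    "p1 \<cdot> P.pair f g = f" "p2 \<cdot> P.pair f g = g"
  using P.pairing[OF assms] by simp_all

lemma pair_comp:
  assumes "Dom C f = Dom C g" "Cod C f = C1" "Cod C g = C1" "d \<cdot> f = c \<cdot> g" "Dom C f = Cod C t"
  shows "P.pair f g \<cdot> t = P.pair (f \<cdot> t) (g \<cdot> t)"
  using P.pairing_comp[OF assms] .

lemma mult_assoc_if_triple_pullback:
  assumes r1: "hom C r1 C3 C2" and r2: "hom C r2 C3 C1" and triples: "is_pullback C r1 r2 (d \<cdot> p2) c"
    and assoc: "(p1 \<cdot> r1) \<odot> ((p2 \<cdot> r1) \<odot> r2) = (m \<cdot> r1) \<odot> r2"
    and fgk: "Dom C f = Dom C g" "Dom C g = Dom C k" "Cod C f = C1" "Cod C g = C1" "Cod C k = C1"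
      "d \<cdot> f = c \<cdot> g" "d \<cdot> g = c \<cdot> k"
  shows "(f \<odot> g) \<odot> k = f \<odot> (g \<odot> k)"
proof -
  interpret T: pullback_square C C3 C2 C1 C0 r1 r2 "d \<cdot> p2" c
    using r1 r2 d c triples by unfold_locales (auto simp: hom_def)
  have [simp]: "Dom C r1 = C3" "Cod C r1 = C2" "Dom C r2 = C3" "Cod C r2 = C1"
    using T.hom_simps by simp_all
  have r12: "d \<cdot> (p2 \<cdot> r1) = c \<cdot> r2"
    using T.commutes by simp
  let ?t = "T.pair (P.pair f g) k"
  have t: "Cod C ?t = C3" "Dom C ?t = Dom C f" "r1 \<cdot> ?t = P.pair f g" "r2 \<cdot> ?t = k"
    using T.pairing[of "P.pair f g" k] fgk by simp_all
  have "((p1 \<cdot> r1) \<odot> ((p2 \<cdot> r1) \<odot> r2)) \<cdot> ?t = f \<odot> (g \<odot> k)"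
    using r12 t fgk by (simp add: pair_comp)
  moreover have "((m \<cdot> r1) \<odot> r2) \<cdot> ?t = (f \<odot> g) \<odot> k"
    using r12 t fgk by (simp add: pair_comp)
  ultimately show ?thesis
    using assoc by simp
qed

end

(* f \<odot> g is the composite of f after g, for generalized elements f, g : X -> C1. *)
locale elementwise_groupoid = groupoid_structure +
  assumes unit_right: "Cod C f = C1 \<Longrightarrow> f \<odot> e \<cdot> (d \<cdot> f) = f"
    and unit_left: "Cod C f = C1 \<Longrightarrow> e \<cdot> (c \<cdot> f) \<odot> f = f"
    and inverse_right: "Cod C f = C1 \<Longrightarrow> f \<odot> i \<cdot> f = e \<cdot> (c \<cdot> f)"
    and inverse_left: "Cod C f = C1 \<Longrightarrow> i \<cdot> f \<odot> f = e \<cdot> (d \<cdot> f)"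
    and mult_assoc: "\<lbrakk>Dom C f = Dom C g; Dom C g = Dom C k; Cod C f = C1; Cod C g = C1; Cod C k = C1;
      d \<cdot> f = c \<cdot> g; d \<cdot> g = c \<cdot> k\<rbrakk> \<Longrightarrow> (f \<odot> g) \<odot> k = f \<odot> (g \<odot> k)"
begin

lemma mult_inverse_cancel_right:
  assumes "Dom C f = Dom C g" "Cod C f = C1" "Cod C g = C1" "d \<cdot> f = c \<cdot> g"
  shows "(f \<odot> g) \<odot> i \<cdot> g = f"
proof -
  have "(f \<odot> g) \<odot> i \<cdot> g = f \<odot> (g \<odot> i \<cdot> g)"
    by (rule mult_assoc) (use assms in simp_all)
  also have "\<dots> = f"
    using assms inverse_right[of g] unit_right[of f] by simp
  finally show ?thesis .
qed

lemma mult_inverse_cancel_left: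
  assumes "Dom C f = Dom C g" "Cod C f = C1" "Cod C g = C1" "d \<cdot> f = c \<cdot> g"
  shows "i \<cdot> f \<odot> (f \<odot> g) = g"
proof -
  have "i \<cdot> f \<odot> (f \<odot> g) = (i \<cdot> f \<odot> f) \<odot> g"
    by (rule mult_assoc[symmetric]) (use assms in simp_all)
  also have "\<dots> = g"
    using assms inverse_left[of f] unit_left[of g] by simp
  finally show ?thesis .
qed

lemma mult_cancel_right:
  assumes "Dom C x = Dom C f" "Dom C y = Dom C f" "Cod C x = C1" "Cod C y = C1" "Cod C f = C1"
    and "d \<cdot> x = c \<cdot> f" "d \<cdot> y = c \<cdot> f" and "x \<odot> f = y \<odot> f"
  shows "x = y"
proof -
  have "x = (x \<odot> f) \<odot> i \<cdot> f"
    by (rule mult_inverse_cancel_right[symmetric]) (use assms in simp_all)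
  also have "\<dots> = (y \<odot> f) \<odot> i \<cdot> f"
    by (simp only: assms(8))
  also have "\<dots> = y"
    by (rule mult_inverse_cancel_right) (use assms in simp_all)
  finally show ?thesis .
qed

lemma mult_cancel_left:
  assumes "Dom C f = Dom C x" "Dom C f = Dom C y" "Cod C x = C1" "Cod C y = C1" "Cod C f = C1"
    and "d \<cdot> f = c \<cdot> x" "d \<cdot> f = c \<cdot> y" and "f \<odot> x = f \<odot> y"
  shows "x = y"
proof -
  have "x = i \<cdot> f \<odot> (f \<odot> x)"
    by (rule mult_inverse_cancel_left[symmetric]) (use assms in simp_all)
  also have "\<dots> = i \<cdot> f \<odot> (f \<odot> y)"
    by (simp only: assms(8))
  also have "\<dots> = y"
    by (rule mult_inverse_cancel_left) (use assms in simp_all)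
  finally show ?thesis .
qed

lemma inverse_involutive: "i \<cdot> i = Idn C C1"
proof (rule mult_cancel_right)
  show "i \<cdot> i \<odot> i = Idn C C1 \<odot> i"
    using inverse_left[of i] inverse_right[of "Idn C C1"] by simp
qed simp_all

lemma inverse_unit: "i \<cdot> e = e"
proof (rule mult_cancel_right)
  show "i \<cdot> e \<odot> e = e \<odot> e"
    using inverse_left[of e] unit_right[of e] by simp
qed simp_all

lemma mult_assoc_triples:
  assumes "hom C r1 C3 C2" "hom C r2 C3 C1" "d \<cdot> (p2 \<cdot> r1) = c \<cdot> r2"
  shows "p1 \<cdot> r1 \<odot> (p2 \<cdot> r1 \<odot> r2) = m \<cdot> r1 \<odot> r2"
proof -
  have [simp]: "Dom C r1 = C3" "Cod C r1 = C2" "Dom C r2 = C3" "Cod C r2 = C1"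
    using assms(1,2) unfolding hom_def by auto
  have "P.pair (p1 \<cdot> r1) (p2 \<cdot> r1) = r1"
    by (rule P.pairing_eq) simp_all
  moreover have "p1 \<cdot> r1 \<odot> p2 \<cdot> r1 \<odot> r2 = p1 \<cdot> r1 \<odot> (p2 \<cdot> r1 \<odot> r2)"
    by (rule mult_assoc) (use assms(3) in simp_all)
  ultimately show ?thesis
    by simp
qed

lemma internal_groupoidI:
  assumes "hom C r1 C3 C2" "hom C r2 C3 C1" "is_pullback C r1 r2 (d \<cdot> p2) c"
  shows "internal_groupoid C C0 C1 C2 d c e m p1 p2 i"
proof -
  interpret T: pullback_square C C3 C2 C1 C0 r1 r2 "d \<cdot> p2" c
    using assms d c by unfold_locales (auto simp: hom_def)
  have "(p1 \<cdot> r1) \<odot> ((p2 \<cdot> r1) \<odot> r2) = (m \<cdot> r1) \<odot> r2"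
    using mult_assoc_triples[OF assms(1,2)] T.commutes by simp
  then have "\<exists>C3 r1 r2. hom C r1 C3 C2 \<and> hom C r2 C3 C1 \<and> is_pullback C r1 r2 (d \<cdot> p2) c \<and>
      (p1 \<cdot> r1) \<odot> ((p2 \<cdot> r1) \<odot> r2) = (m \<cdot> r1) \<odot> r2"
    using assms by blast
  then show ?thesis
    unfolding internal_groupoid_def
    using d c e m p1 p2 i pullback unit_right[of "Idn C C1"] unit_left[of "Idn C C1"]
      inverse_right[of "Idn C C1"] inverse_left[of "Idn C C1"] inverse_involutive inverse_unit
    by (intro conjI) simp_all
qed

end

lemma internal_groupoid_elementwise:
  assumes "category C" and G: "internal_groupoid C C0 C1 C2 d c e m p1 p2 i"
  shows "elementwise_groupoid C C0 C1 C2 d c e m p1 p2 i"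
proof -
  interpret groupoid_structure C C0 C1 C2 d c e m p1 p2 i
    using assms unfolding internal_groupoid_def by unfold_locales auto
  from G obtain C3 r1 r2 where r: "hom C r1 C3 C2" "hom C r2 C3 C1"
    and triples: "is_pullback C r1 r2 (d \<cdot> p2) c"
    and assoc: "(p1 \<cdot> r1) \<odot> ((p2 \<cdot> r1) \<odot> r2) = (m \<cdot> r1) \<odot> r2"
    unfolding internal_groupoid_def by blast
  have laws: "Idn C C1 \<odot> e \<cdot> d = Idn C C1" "e \<cdot> c \<odot> Idn C C1 = Idn C C1"
    "Idn C C1 \<odot> i = e \<cdot> c" "i \<odot> Idn C C1 = e \<cdot> d"
    using G unfolding internal_groupoid_def by auto
  show ?thesis
  proof unfold_locales
    fix f assume f: "Cod C f = C1"
    show "f \<odot> e \<cdot> (d \<cdot> f) = f"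
      using comp_reduce[OF laws(1), of f] f by (simp add: pair_comp)
    show "e \<cdot> (c \<cdot> f) \<odot> f = f"
      using comp_reduce[OF laws(2), of f] f by (simp add: pair_comp)
    show "f \<odot> i \<cdot> f = e \<cdot> (c \<cdot> f)"
      using comp_reduce[OF laws(3), of f] f by (simp add: pair_comp)
    show "i \<cdot> f \<odot> f = e \<cdot> (d \<cdot> f)"
      using comp_reduce[OF laws(4), of f] f by (simp add: pair_comp)
  next
    fix f g k
    assume "Dom C f = Dom C g" "Dom C g = Dom C k" "Cod C f = C1" "Cod C g = C1" "Cod C k = C1"
      "d \<cdot> f = c \<cdot> g" "d \<cdot> g = c \<cdot> k"
    then show "(f \<odot> g) \<odot> k = f \<odot> (g \<odot> k)"
      by (rule mult_assoc_if_triple_pullback[OF r triples assoc])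
  qed
qed

definition arises_from_internal_groupoid :: "('o, 'm) cat \<Rightarrow> 'o \<Rightarrow> 'o \<Rightarrow> 'm \<Rightarrow> 'm \<Rightarrow> 'm \<Rightarrow> bool"
  where "arises_from_internal_groupoid C C1 C2 \<theta> \<phi> m \<longleftrightarrow>
    (\<exists>C0 d c e p1 p2 i. internal_groupoid C C0 C1 C2 d c e m p1 p2 i \<and>
       \<theta> = pairing C p1 p2 (Cmp C i p1) m \<and> \<phi> = pairing C p1 p2 m (Cmp C i p2))"

definition link_unit_sections :: "('o, 'm) cat \<Rightarrow> 'o \<Rightarrow> 'o \<Rightarrow> 'm \<Rightarrow> 'm \<Rightarrow> 'm \<Rightarrow> bool"
  where "link_unit_sections C C1 C2 \<theta> \<phi> m \<longleftrightarrow>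
    (\<exists>e1 e2. hom C e1 C1 C2 \<and> hom C e2 C1 C2 \<and>
       Cmp C m e1 = Idn C C1 \<and> Cmp C m e2 = Idn C C1 \<and>
       Cmp C \<theta> e2 = e2 \<and> Cmp C \<phi> e1 = e1 \<and>
       Cmp C m (Cmp C \<theta> (Cmp C \<phi> e2)) = Cmp C m (Cmp C \<phi> (Cmp C \<theta> e1)) \<and>
       Cmp C (Cmp C m (Cmp C \<theta> e1)) (Cmp C m \<phi>) = Cmp C (Cmp C m (Cmp C \<phi> e2)) (Cmp C m \<theta>) \<and>
       Cmp C (Cmp C m (Cmp C \<theta> e1)) m = Cmp C (Cmp C m (Cmp C \<theta> e1)) (Cmp C m \<theta>) \<and>
       Cmp C (Cmp C m (Cmp C \<phi> e2)) m = Cmp C (Cmp C m (Cmp C \<phi> e2)) (Cmp C m \<phi>))"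

definition bicartesian_cospan :: "('o, 'm) cat \<Rightarrow> 'o \<Rightarrow> 'm \<Rightarrow> 'm \<Rightarrow> bool"
  where "bicartesian_cospan C X f1 f2 \<longleftrightarrow>
    (\<exists>Z g1 g2. hom C g1 X Z \<and> hom C g2 X Z \<and> is_pullback C f1 f2 g1 g2 \<and> is_pushout C f1 f2 g1 g2)"

definition link_associative :: "('o, 'm) cat \<Rightarrow> 'o \<Rightarrow> 'm \<Rightarrow> 'm \<Rightarrow> 'm \<Rightarrow> bool"
  where "link_associative C C2 \<theta> \<phi> m \<longleftrightarrow>
    (\<exists>C3 q1 q2. hom C q1 C3 C2 \<and> hom C q2 C3 C2 \<and>
       is_pullback C q1 q2 (Cmp C m \<theta>) (Cmp C m \<phi>) \<and> is_pushout C q1 q2 (Cmp C m \<theta>) (Cmp C m \<phi>) \<and>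
       (\<exists>m1 m2. hom C m1 C3 C2 \<and> hom C m2 C3 C2 \<and>
          Cmp C (Cmp C m \<phi>) m1 = Cmp C m q1 \<and> Cmp C (Cmp C m \<theta>) m1 = Cmp C (Cmp C m \<theta>) q2 \<and>
          Cmp C (Cmp C m \<phi>) m2 = Cmp C (Cmp C m \<phi>) q1 \<and> Cmp C (Cmp C m \<theta>) m2 = Cmp C m q2 \<and>
          Cmp C m m1 = Cmp C m m2))"

context elementwise_groupoid
begin

lemma projections_from_mult:
  assumes "Cod C x = C2"
  shows "p1 \<cdot> x = m \<cdot> x \<odot> i \<cdot> (p2 \<cdot> x)" and "p2 \<cdot> x = i \<cdot> (p1 \<cdot> x) \<odot> m \<cdot> x"
proof -
  have "P.pair (p1 \<cdot> x) (p2 \<cdot> x) = x"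
    by (rule P.pairing_eq) (use assms in simp_all)
  then have mx: "p1 \<cdot> x \<odot> p2 \<cdot> x = m \<cdot> x"
    by simp
  show "p1 \<cdot> x = m \<cdot> x \<odot> i \<cdot> (p2 \<cdot> x)"
    using mult_inverse_cancel_right[of "p1 \<cdot> x" "p2 \<cdot> x"] assms by (simp add: mx)
  show "p2 \<cdot> x = i \<cdot> (p1 \<cdot> x) \<odot> m \<cdot> x"
    using mult_inverse_cancel_left[of "p1 \<cdot> x" "p2 \<cdot> x"] assms by (simp add: mx)
qed

lemma jointly_mono_m_p1: "jointly_mono C C2 [m, p1]"
  unfolding jointly_mono_def
proof (intro conjI allI impI)
  fix x y
  assume "Cod C x = C2 \<and> Cod C y = C2 \<and> Dom C x = Dom C y \<and> (\<forall>f\<in>set [m, p1]. f \<cdot> x = f \<cdot> y)"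
  then have xy: "Cod C x = C2" "Cod C y = C2" "Dom C x = Dom C y" "m \<cdot> x = m \<cdot> y" "p1 \<cdot> x = p1 \<cdot> y"
    by auto
  have "p2 \<cdot> x = p2 \<cdot> y"
    using projections_from_mult(2)[OF xy(1)] projections_from_mult(2)[OF xy(2)] xy(4,5) by simp
  then show "x = y"
    by (rule P.eqI[OF xy(1-3,5)])
qed simp

lemma jointly_mono_m_p2: "jointly_mono C C2 [m, p2]"
  unfolding jointly_mono_def
proof (intro conjI allI impI)
  fix x y
  assume "Cod C x = C2 \<and> Cod C y = C2 \<and> Dom C x = Dom C y \<and> (\<forall>f\<in>set [m, p2]. f \<cdot> x = f \<cdot> y)"
  then have xy: "Cod C x = C2" "Cod C y = C2" "Dom C x = Dom C y" "m \<cdot> x = m \<cdot> y" "p2 \<cdot> x = p2 \<cdot> y"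
    by auto
  have "p1 \<cdot> x = p1 \<cdot> y"
    using projections_from_mult(1)[OF xy(1)] projections_from_mult(1)[OF xy(2)] xy(4,5) by simp
  then show "x = y"
    by (rule P.eqI[OF xy(1-3)]) (rule xy(5))
qed simp

lemma unit_pairs:
  "hom C (P.pair (Idn C C1) (e \<cdot> d)) C1 C2" "p1 \<cdot> P.pair (Idn C C1) (e \<cdot> d) = Idn C C1"
  "p2 \<cdot> P.pair (Idn C C1) (e \<cdot> d) = e \<cdot> d"
  "hom C (P.pair (e \<cdot> c) (Idn C C1)) C1 C2" "p1 \<cdot> P.pair (e \<cdot> c) (Idn C C1) = e \<cdot> c"
  "p2 \<cdot> P.pair (e \<cdot> c) (Idn C C1) = Idn C C1"
  unfolding hom_def by simp_all

lemma shear_simps: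
  assumes \<theta>: "\<theta> = P.pair (i \<cdot> p1) m" and \<phi>: "\<phi> = P.pair m (i \<cdot> p2)"
  shows "Dom C \<theta> = C2" "Cod C \<theta> = C2" "p1 \<cdot> \<theta> = i \<cdot> p1" "p2 \<cdot> \<theta> = m"
    and "Dom C \<phi> = C2" "Cod C \<phi> = C2" "p1 \<cdot> \<phi> = m" "p2 \<cdot> \<phi> = i \<cdot> p2"
    and "m \<cdot> \<theta> = p2" "m \<cdot> \<phi> = p1"
  using projections_from_mult[of "Idn C C2"] unfolding \<theta> \<phi> by simp_all

lemma unit_sections_of_shears:
  assumes \<theta>: "\<theta> = P.pair (i \<cdot> p1) m" and \<phi>: "\<phi> = P.pair m (i \<cdot> p2)"
  shows "link_unit_sections C C1 C2 \<theta> \<phi> m"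
proof -
  define e1 where "e1 = P.pair (Idn C C1) (e \<cdot> d)"
  define e2 where "e2 = P.pair (e \<cdot> c) (Idn C C1)"
  note e1 = unit_pairs(1-3)[folded e1_def] and e2 = unit_pairs(4-6)[folded e2_def]
  have [simp]: "Dom C e1 = C1" "Cod C e1 = C2" "Dom C e2 = C1" "Cod C e2 = C2"
    using e1(1) e2(1) unfolding hom_def by auto
  note \<theta>_proj = shear_simps(1-4)[OF \<theta> \<phi>] and \<phi>_proj = shear_simps(5-8)[OF \<theta> \<phi>]
    and m\<theta> = shear_simps(9)[OF \<theta> \<phi>] and m\<phi> = shear_simps(10)[OF \<theta> \<phi>]
  have m_e1: "m \<cdot> e1 = Idn C C1" and m_e2: "m \<cdot> e2 = Idn C C1"
    using unit_right[of "Idn C C1"] unit_left[of "Idn C C1"] unfolding e1_def e2_def by simp_all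
  have \<theta>_e2: "\<theta> \<cdot> e2 = e2"
    using \<theta>_proj e2 comp_reduce[OF \<theta>_proj(3), of e2] comp_reduce[OF \<theta>_proj(4), of e2] m_e2
      inverse_unit comp_reduce[OF inverse_unit, of c]
    by - (rule P.eqI, simp_all)
  have \<phi>_e1: "\<phi> \<cdot> e1 = e1"
    using \<phi>_proj e1 comp_reduce[OF \<phi>_proj(3), of e1] comp_reduce[OF \<phi>_proj(4), of e1] m_e1
      inverse_unit comp_reduce[OF inverse_unit, of d]
    by - (rule P.eqI, simp_all)
  have "m \<cdot> (\<theta> \<cdot> (\<phi> \<cdot> e2)) = i"
    using comp_reduce[OF m\<theta>, of "\<phi> \<cdot> e2"] comp_reduce[OF \<phi>_proj(4), of e2] \<theta>_proj \<phi>_proj e2 by simp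
  moreover have "m \<cdot> (\<phi> \<cdot> (\<theta> \<cdot> e1)) = i"
    using comp_reduce[OF m\<phi>, of "\<theta> \<cdot> e1"] comp_reduce[OF \<theta>_proj(3), of e1] \<theta>_proj \<phi>_proj e1 by simp
  moreover have "m \<cdot> (\<theta> \<cdot> e1) = e \<cdot> d" and "m \<cdot> (\<phi> \<cdot> e2) = e \<cdot> c"
    using comp_reduce[OF m\<theta>, of e1] comp_reduce[OF m\<phi>, of e2] \<theta>_proj \<phi>_proj e1 e2 by simp_all
  ultimately show ?thesis
    unfolding link_unit_sections_def using e1(1) e2(1) m_e1 m_e2 \<theta>_e2 \<phi>_e1 m\<theta> m\<phi>
    by - (rule exI[of _ e1], rule exI[of _ e2], simp)
qed

lemma bicartesian_cospan_projections: "bicartesian_cospan C C1 p1 p2"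
  unfolding bicartesian_cospan_def
  using d c pullback P.pushout_if_split_epis[OF e d_e e c_e] by blast

lemma associative_of_shears:
  assumes \<theta>: "\<theta> = P.pair (i \<cdot> p1) m" and \<phi>: "\<phi> = P.pair m (i \<cdot> p2)"
    and r: "hom C r1 C3 C2" "hom C r2 C3 C1" and triples: "is_pullback C r1 r2 (d \<cdot> p2) c"
  shows "link_associative C C2 \<theta> \<phi> m"
proof -
  interpret T: pullback_square C C3 C2 C1 C0 r1 r2 "d \<cdot> p2" c
    using r d c triples by unfold_locales (auto simp: hom_def)
  have [simp]: "Dom C r1 = C3" "Cod C r1 = C2" "Dom C r2 = C3" "Cod C r2 = C1"
    using T.hom_simps by simp_all
  have r12: "d \<cdot> (p2 \<cdot> r1) = c \<cdot> r2"
    using T.commutes by simp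
  define q2 where "q2 = P.pair (p2 \<cdot> r1) r2"
  have q2: "hom C q2 C3 C2" "p1 \<cdot> q2 = p2 \<cdot> r1" "p2 \<cdot> q2 = r2"
    unfolding q2_def hom_def using r12 by simp_all
  have pb: "is_pullback C r1 q2 p2 p1"
    using P.pullback_pasting_cancel[OF r(1) q2(1) p2 q2(2)[symmetric]] triples q2(3) by simp
  then interpret Q: pullback_square C C3 C2 C2 C1 r1 q2 p2 p1
    using r(1) q2(1) p1 p2 by unfold_locales
  have po: "is_pushout C r1 q2 p2 p1"
    using Q.pushout_if_split_epis unit_pairs by blast
  define m1 where "m1 = P.pair (m \<cdot> r1) r2"
  define m2 where "m2 = P.pair (p1 \<cdot> r1) (m \<cdot> q2)"
  have m1: "hom C m1 C3 C2" "p1 \<cdot> m1 = m \<cdot> r1" "p2 \<cdot> m1 = p2 \<cdot> q2"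
    unfolding m1_def hom_def using r12 q2 by simp_all
  have m2: "hom C m2 C3 C2" "p1 \<cdot> m2 = p1 \<cdot> r1" "p2 \<cdot> m2 = m \<cdot> q2"
    unfolding m2_def hom_def using r12 q2 by simp_all
  have "m \<cdot> m1 = m \<cdot> m2"
    using mult_assoc_triples[OF r r12] unfolding m1_def m2_def q2_def by simp
  then show ?thesis
    unfolding link_associative_def shear_simps(9,10)[OF \<theta> \<phi>]
    using q2(1) pb po m1 m2 r(1) by blast
qed

end

lemma link_conditions_if_arises:
  assumes "category C" and "arises_from_internal_groupoid C C1 C2 \<theta> \<phi> m"
  shows "jointly_mono C C2 [m, Cmp C m \<theta>] \<and> jointly_mono C C2 [m, Cmp C m \<phi>] \<and>
    link_unit_sections C C1 C2 \<theta> \<phi> m \<and> bicartesian_cospan C C1 (Cmp C m \<phi>) (Cmp C m \<theta>) \<and>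
    link_associative C C2 \<theta> \<phi> m"
proof -
  obtain C0 d c e p1 p2 i where G: "internal_groupoid C C0 C1 C2 d c e m p1 p2 i"
    and \<theta>: "\<theta> = pairing C p1 p2 (Cmp C i p1) m" and \<phi>: "\<phi> = pairing C p1 p2 m (Cmp C i p2)"
    using assms(2) unfolding arises_from_internal_groupoid_def by blast
  interpret elementwise_groupoid C C0 C1 C2 d c e m p1 p2 i
    using internal_groupoid_elementwise[OF assms(1) G] .
  obtain C3 r1 r2 where "hom C r1 C3 C2" "hom C r2 C3 C1" "is_pullback C r1 r2 (d \<cdot> p2) c"
    using G unfolding internal_groupoid_def by blast
  then show ?thesis
    using jointly_mono_m_p1 jointly_mono_m_p2 unit_sections_of_shears[OF \<theta> \<phi>] bicartesian_cospan_projections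
      associative_of_shears[OF \<theta> \<phi>] shear_simps(9,10)[OF \<theta> \<phi>]
    by simp
qed

locale link_with_conditions = category_ctx C for C :: "('o, 'm) cat" +
  fixes C0 C1 C2 C3 \<theta> \<phi> m e1 e2 d c q1 q2 m1 m2
  assumes m: "hom C m C2 C1" and \<theta>: "hom C \<theta> C2 C2" and \<phi>: "hom C \<phi> C2 C2"
    and \<theta>_\<theta>: "\<theta> \<cdot> \<theta> = Idn C C2" and \<phi>_\<phi>: "\<phi> \<cdot> \<phi> = Idn C C2"
    and e1: "hom C e1 C1 C2" and e2: "hom C e2 C1 C2"
    and m_e1: "m \<cdot> e1 = Idn C C1" and m_e2: "m \<cdot> e2 = Idn C C1"
    and \<theta>_e2: "\<theta> \<cdot> e2 = e2" and \<phi>_e1: "\<phi> \<cdot> e1 = e1"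
    and inverse_agree: "m \<cdot> (\<theta> \<cdot> (\<phi> \<cdot> e2)) = m \<cdot> (\<phi> \<cdot> (\<theta> \<cdot> e1))"
    and units_agree: "(m \<cdot> (\<theta> \<cdot> e1)) \<cdot> (m \<cdot> \<phi>) = (m \<cdot> (\<phi> \<cdot> e2)) \<cdot> (m \<cdot> \<theta>)"
    and dom_unit_absorbs: "(m \<cdot> (\<theta> \<cdot> e1)) \<cdot> m = (m \<cdot> (\<theta> \<cdot> e1)) \<cdot> (m \<cdot> \<theta>)"
    and cod_unit_absorbs: "(m \<cdot> (\<phi> \<cdot> e2)) \<cdot> m = (m \<cdot> (\<phi> \<cdot> e2)) \<cdot> (m \<cdot> \<phi>)"
    and d: "hom C d C1 C0" and c: "hom C c C1 C0"
    and pairs_pullback: "is_pullback C (m \<cdot> \<phi>) (m \<cdot> \<theta>) d c"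
    and pairs_pushout: "is_pushout C (m \<cdot> \<phi>) (m \<cdot> \<theta>) d c"
    and q1: "hom C q1 C3 C2" and q2: "hom C q2 C3 C2"
    and triples_pullback: "is_pullback C q1 q2 (m \<cdot> \<theta>) (m \<cdot> \<phi>)"
    and m1: "hom C m1 C3 C2" and m2: "hom C m2 C3 C2"
    and m1_fst: "(m \<cdot> \<phi>) \<cdot> m1 = m \<cdot> q1" and m1_snd: "(m \<cdot> \<theta>) \<cdot> m1 = (m \<cdot> \<theta>) \<cdot> q2"
    and m2_fst: "(m \<cdot> \<phi>) \<cdot> m2 = (m \<cdot> \<phi>) \<cdot> q1" and m2_snd: "(m \<cdot> \<theta>) \<cdot> m2 = m \<cdot> q2"
    and m1_m2: "m \<cdot> m1 = m \<cdot> m2"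
begin

sublocale P: pullback_square C C2 C1 C1 C0 "m \<cdot> \<phi>" "m \<cdot> \<theta>" d c
  using m \<theta> \<phi> d c pairs_pullback by unfold_locales (auto simp: hom_def)

sublocale T: pullback_square C C3 C2 C2 C1 q1 q2 "m \<cdot> \<theta>" "m \<cdot> \<phi>"
  using m \<theta> \<phi> q1 q2 triples_pullback by unfold_locales (auto simp: hom_def)

lemma hom_simps [simp]:
  "Dom C m = C2" "Cod C m = C1" "Dom C \<theta> = C2" "Cod C \<theta> = C2" "Dom C \<phi> = C2" "Cod C \<phi> = C2"
  "Dom C e1 = C1" "Cod C e1 = C2" "Dom C e2 = C1" "Cod C e2 = C2"
  "Dom C m1 = C3" "Cod C m1 = C2" "Dom C m2 = C3" "Cod C m2 = C2"
  using m \<theta> \<phi> e1 e2 m1 m2 unfolding hom_def by auto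

lemma comp_simps [simp]:
  "Cod C x = C2 \<Longrightarrow> \<theta> \<cdot> (\<theta> \<cdot> x) = x" "Cod C x = C2 \<Longrightarrow> \<phi> \<cdot> (\<phi> \<cdot> x) = x"
  "Cod C y = C1 \<Longrightarrow> m \<cdot> (e1 \<cdot> y) = y" "Cod C y = C1 \<Longrightarrow> m \<cdot> (e2 \<cdot> y) = y"
  "Cod C y = C1 \<Longrightarrow> \<theta> \<cdot> (e2 \<cdot> y) = e2 \<cdot> y" "Cod C y = C1 \<Longrightarrow> \<phi> \<cdot> (e1 \<cdot> y) = e1 \<cdot> y"
  "Cod C x = C2 \<Longrightarrow> d \<cdot> (m \<cdot> (\<phi> \<cdot> x)) = c \<cdot> (m \<cdot> (\<theta> \<cdot> x))"
  using comp_reduce[OF \<theta>_\<theta>, of x] comp_reduce[OF \<phi>_\<phi>, of x] comp_reduce[OF m_e1, of y]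
    comp_reduce[OF m_e2, of y] comp_reduce[OF \<theta>_e2, of y] comp_reduce[OF \<phi>_e1, of y]
    P.commutes_comp[of x]
  by simp_all

lemmas [simp] = \<theta>_\<theta> \<phi>_\<phi> m_e1 m_e2 \<theta>_e2 \<phi>_e1

lemma pair_proj_comp [simp]:
  assumes "Dom C f = Dom C g" "Cod C f = C1" "Cod C g = C1" "d \<cdot> f = c \<cdot> g"
  shows "m \<cdot> (\<phi> \<cdot> P.pair f g) = f" "m \<cdot> (\<theta> \<cdot> P.pair f g) = g"
  using P.pairing[OF assms] by simp_all

(* In the groupoid under construction these are e d, e c and the inverse i. *)
definition dom_unit where "dom_unit = m \<cdot> (\<theta> \<cdot> e1)"
definition cod_unit where "cod_unit = m \<cdot> (\<phi> \<cdot> e2)"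
definition inverse_map where "inverse_map = m \<cdot> (\<theta> \<cdot> (\<phi> \<cdot> e2))"

lemma unit_inverse_hom_simps [simp]:
  "Dom C dom_unit = C1" "Cod C dom_unit = C1" "Dom C cod_unit = C1" "Cod C cod_unit = C1"
  "Dom C inverse_map = C1" "Cod C inverse_map = C1"
  unfolding dom_unit_def cod_unit_def inverse_map_def by simp_all

lemma unit_inverse_comp [simp]:
  "Cod C y = C1 \<Longrightarrow> m \<cdot> (\<theta> \<cdot> (e1 \<cdot> y)) = dom_unit \<cdot> y"
  "Cod C y = C1 \<Longrightarrow> m \<cdot> (\<phi> \<cdot> (e2 \<cdot> y)) = cod_unit \<cdot> y"
  "Cod C y = C1 \<Longrightarrow> m \<cdot> (\<theta> \<cdot> (\<phi> \<cdot> (e2 \<cdot> y))) = inverse_map \<cdot> y"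
  "Cod C y = C1 \<Longrightarrow> m \<cdot> (\<phi> \<cdot> (\<theta> \<cdot> (e1 \<cdot> y))) = inverse_map \<cdot> y"
  unfolding dom_unit_def cod_unit_def inverse_map_def
  using comp_reduce[OF inverse_agree, of y] by simp_all

lemma c_dom_unit [simp]: "c \<cdot> dom_unit = d"
  using comp_simps(7)[of e1] unfolding dom_unit_def by simp

lemma d_cod_unit [simp]: "d \<cdot> cod_unit = c"
  using comp_simps(7)[of e2] unfolding cod_unit_def by simp

lemma dom_unit_idem: "dom_unit \<cdot> dom_unit = dom_unit"
  using comp_reduce[OF dom_unit_absorbs, of e1] unfolding dom_unit_def by simp

lemma cod_unit_idem: "cod_unit \<cdot> cod_unit = cod_unit"
  using comp_reduce[OF cod_unit_absorbs, of e2] unfolding cod_unit_def by simp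

lemma d_dom_unit [simp]: "d \<cdot> dom_unit = d"
  using dom_unit_idem comp_reduce[OF c_dom_unit, of dom_unit] by simp

lemma c_cod_unit [simp]: "c \<cdot> cod_unit = c"
  using cod_unit_idem comp_reduce[OF d_cod_unit, of cod_unit] by simp

lemma d_m: "d \<cdot> m = d \<cdot> (m \<cdot> \<theta>)"
proof -
  have "d \<cdot> m = c \<cdot> (dom_unit \<cdot> m)"
    using comp_reduce[OF c_dom_unit, of m] by simp
  also have "\<dots> = c \<cdot> (dom_unit \<cdot> (m \<cdot> \<theta>))"
    using dom_unit_absorbs unfolding dom_unit_def by simp
  also have "\<dots> = d \<cdot> (m \<cdot> \<theta>)"
    using comp_reduce[OF c_dom_unit, of "m \<cdot> \<theta>"] by simp
  finally show ?thesis .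
qed

lemma c_m: "c \<cdot> m = c \<cdot> (m \<cdot> \<phi>)"
proof -
  have "c \<cdot> m = d \<cdot> (cod_unit \<cdot> m)"
    using comp_reduce[OF d_cod_unit, of m] by simp
  also have "\<dots> = d \<cdot> (cod_unit \<cdot> (m \<cdot> \<phi>))"
    using cod_unit_absorbs unfolding cod_unit_def by simp
  also have "\<dots> = c \<cdot> (m \<cdot> \<phi>)"
    using comp_reduce[OF d_cod_unit, of "m \<cdot> \<phi>"] by simp
  finally show ?thesis .
qed

definition e where "e = (THE u. Dom C u = C0 \<and> Cod C u = C1 \<and> u \<cdot> d = dom_unit \<and> u \<cdot> c = cod_unit)"

lemma e_mediates: "Dom C e = C0" "Cod C e = C1" "e \<cdot> d = dom_unit" "e \<cdot> c = cod_unit"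
proof -
  have "dom_unit \<cdot> (m \<cdot> \<phi>) = cod_unit \<cdot> (m \<cdot> \<theta>)"
    using units_agree unfolding dom_unit_def cod_unit_def .
  then have "\<exists>!u. Dom C u = Cod C d \<and> Cod C u = Cod C dom_unit \<and> u \<cdot> d = dom_unit \<and> u \<cdot> c = cod_unit"
    by (intro pushout_mediator[OF pairs_pushout]) simp_all
  then have "\<exists>!u. Dom C u = C0 \<and> Cod C u = C1 \<and> u \<cdot> d = dom_unit \<and> u \<cdot> c = cod_unit"
    by simp
  then have "Dom C e = C0 \<and> Cod C e = C1 \<and> e \<cdot> d = dom_unit \<and> e \<cdot> c = cod_unit"
    unfolding e_def by (rule theI')
  then show "Dom C e = C0" "Cod C e = C1" "e \<cdot> d = dom_unit" "e \<cdot> c = cod_unit"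
    by auto
qed

lemma d_e: "d \<cdot> e = Idn C C0"
  by (rule pushout_eqI[OF pairs_pushout]) (use e_mediates comp_reduce[OF e_mediates(3), of dom_unit] in simp_all)

lemma c_e: "c \<cdot> e = Idn C C0"
  by (rule pushout_eqI[OF pairs_pushout]) (use e_mediates comp_reduce[OF e_mediates(4), of cod_unit] in simp_all)

lemma d_inverse: "d \<cdot> inverse_map = c"
proof -
  have "d \<cdot> inverse_map = d \<cdot> (m \<cdot> (\<theta> \<cdot> (\<theta> \<cdot> (\<phi> \<cdot> e2))))"
    unfolding inverse_map_def using comp_reduce[OF d_m, of "\<theta> \<cdot> (\<phi> \<cdot> e2)"] by simp
  also have "\<dots> = c"
    using d_cod_unit unfolding cod_unit_def by simp
  finally show ?thesis .
qed

lemma c_inverse: "c \<cdot> inverse_map = d"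
proof -
  have "c \<cdot> inverse_map = c \<cdot> (m \<cdot> (\<phi> \<cdot> (\<phi> \<cdot> (\<theta> \<cdot> e1))))"
    unfolding inverse_map_def inverse_agree using comp_reduce[OF c_m, of "\<phi> \<cdot> (\<theta> \<cdot> e1)"] by simp
  also have "\<dots> = d"
    using c_dom_unit unfolding dom_unit_def by simp
  finally show ?thesis .
qed

sublocale G: groupoid_structure C C0 C1 C2 d c e m "m \<cdot> \<phi>" "m \<cdot> \<theta>" inverse_map
  using d c m pairs_pullback d_e c_e d_m c_m d_inverse c_inverse e_mediates(1,2)
  by unfold_locales (auto simp: hom_def)

(* With p2 = m \<theta>, these rewrite rules loop against \<open>\<theta> \<cdot> \<theta> = Idn C C2\<close>. *)
declare G.d_m [simp del] G.c_m [simp del] G.comp_simps(3,4) [simp del]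

lemma e_comp [simp]: "Cod C y = C1 \<Longrightarrow> e \<cdot> (d \<cdot> y) = dom_unit \<cdot> y" "Cod C y = C1 \<Longrightarrow> e \<cdot> (c \<cdot> y) = cod_unit \<cdot> y"
  using comp_reduce[OF e_mediates(3), of y] comp_reduce[OF e_mediates(4), of y] e_mediates by simp_all

lemma mult_assoc:
  assumes "Dom C f = Dom C g" "Dom C g = Dom C k" "Cod C f = C1" "Cod C g = C1" "Cod C k = C1"
    "d \<cdot> f = c \<cdot> g" "d \<cdot> g = c \<cdot> k"
  shows "m \<cdot> P.pair (m \<cdot> P.pair f g) k = m \<cdot> P.pair f (m \<cdot> P.pair g k)"
proof -
  note u = P.pairing[of f g] and v = P.pairing[of g k]
  let ?t = "T.pair (P.pair f g) (P.pair g k)"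
  have t: "Cod C ?t = C3" "q1 \<cdot> ?t = P.pair f g" "q2 \<cdot> ?t = P.pair g k"
    using T.pairing[of "P.pair f g" "P.pair g k"] u v assms by simp_all
  have "P.pair (m \<cdot> P.pair f g) k = m1 \<cdot> ?t"
    using comp_reduce[OF m1_fst, of ?t] comp_reduce[OF m1_snd, of ?t] t u v assms
    by - (rule P.pairing_eq, simp_all)
  moreover have "P.pair f (m \<cdot> P.pair g k) = m2 \<cdot> ?t"
    using comp_reduce[OF m2_fst, of ?t] comp_reduce[OF m2_snd, of ?t] t u v assms
    by - (rule P.pairing_eq, simp_all)
  ultimately show ?thesis
    using comp_reduce[OF m1_m2, of ?t] t by simp
qed

sublocale E: elementwise_groupoid C C0 C1 C2 d c e m "m \<cdot> \<phi>" "m \<cdot> \<theta>" inverse_map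
proof unfold_locales
  fix f
  assume f: "Cod C f = C1"
  have "P.pair f (dom_unit \<cdot> f) = e1 \<cdot> f"
    by (rule P.pairing_eq) (use f in simp_all)
  then show "m \<cdot> P.pair f (e \<cdot> (d \<cdot> f)) = f"
    using f by simp
  have "P.pair (cod_unit \<cdot> f) f = e2 \<cdot> f"
    by (rule P.pairing_eq) (use f in simp_all)
  then show "m \<cdot> P.pair (e \<cdot> (c \<cdot> f)) f = f"
    using f by simp
  have "P.pair f (inverse_map \<cdot> f) = \<phi> \<cdot> (e2 \<cdot> f)"
    by (rule P.pairing_eq) (use f in simp_all)
  then show "m \<cdot> P.pair f (inverse_map \<cdot> f) = e \<cdot> (c \<cdot> f)"
    using f by simp
  have "P.pair (inverse_map \<cdot> f) f = \<theta> \<cdot> (e1 \<cdot> f)"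
    by (rule P.pairing_eq) (use f in simp_all)
  then show "m \<cdot> P.pair (inverse_map \<cdot> f) f = e \<cdot> (d \<cdot> f)"
    using f by simp
qed (fact mult_assoc)

lemma pair_projections: "P.pair (m \<cdot> \<phi>) (m \<cdot> \<theta>) = Idn C C2"
  by (rule P.pairing_eq) simp_all

lemma \<theta>_shear: "\<theta> = P.pair (inverse_map \<cdot> (m \<cdot> \<phi>)) m"
proof -
  let ?F = "m \<cdot> (\<phi> \<cdot> \<theta>)" and ?\<pi>1 = "m \<cdot> \<phi>" and ?\<pi>2 = "m \<cdot> \<theta>"
  have dF: "d \<cdot> ?F = c \<cdot> ?\<pi>1"
    using comp_simps(7)[of \<theta>] c_m by simp
  have "P.pair ?F m = \<theta>"
    by (rule P.pairing_eq) simp_all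
  then have "m \<cdot> P.pair (m \<cdot> P.pair ?F ?\<pi>1) ?\<pi>2 = m \<cdot> P.pair (e \<cdot> (c \<cdot> ?\<pi>2)) ?\<pi>2"
    using mult_assoc[of ?F ?\<pi>1 ?\<pi>2] dF E.unit_left[of ?\<pi>2] pair_projections by simp
  then have "m \<cdot> P.pair ?F ?\<pi>1 = e \<cdot> (c \<cdot> ?\<pi>2)"
    by (rule E.mult_cancel_right[rotated -1])
      (use dF G.comp_simps(3)[of "P.pair ?F ?\<pi>1"] comp_reduce[OF d_cod_unit, of ?\<pi>2] in simp_all)
  then have "m \<cdot> P.pair ?F ?\<pi>1 = m \<cdot> P.pair (inverse_map \<cdot> ?\<pi>1) ?\<pi>1"
    using E.inverse_left[of ?\<pi>1] by simp
  then have "?F = inverse_map \<cdot> ?\<pi>1"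
    by (rule E.mult_cancel_right[rotated -1]) (use dF d_inverse in simp_all)
  then show ?thesis
    by - (rule P.pairing_eq[symmetric], simp_all)
qed

lemma \<phi>_shear: "\<phi> = P.pair m (inverse_map \<cdot> (m \<cdot> \<theta>))"
proof -
  let ?G = "m \<cdot> (\<theta> \<cdot> \<phi>)" and ?\<pi>1 = "m \<cdot> \<phi>" and ?\<pi>2 = "m \<cdot> \<theta>"
  have dG: "d \<cdot> ?\<pi>2 = c \<cdot> ?G"
    using comp_simps(7)[of \<phi>] d_m by simp
  have "P.pair m ?G = \<phi>"
    by (rule P.pairing_eq) simp_all
  then have "m \<cdot> P.pair ?\<pi>1 (m \<cdot> P.pair ?\<pi>2 ?G) = m \<cdot> P.pair ?\<pi>1 (e \<cdot> (d \<cdot> ?\<pi>1))"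
    using mult_assoc[of ?\<pi>1 ?\<pi>2 ?G] dG E.unit_right[of ?\<pi>1] pair_projections by simp
  then have "m \<cdot> P.pair ?\<pi>2 ?G = e \<cdot> (d \<cdot> ?\<pi>1)"
    by (rule E.mult_cancel_left[rotated -1])
      (use dG G.comp_simps(4)[of "P.pair ?\<pi>2 ?G"] comp_reduce[OF c_cod_unit, of ?\<pi>2] in simp_all)
  then have "m \<cdot> P.pair ?\<pi>2 ?G = m \<cdot> P.pair ?\<pi>2 (inverse_map \<cdot> ?\<pi>2)"
    using E.inverse_right[of ?\<pi>2] by simp
  then have "?G = inverse_map \<cdot> ?\<pi>2"
    by (rule E.mult_cancel_left[rotated -1]) (use dG c_inverse in simp_all)
  then show ?thesis
    by - (rule P.pairing_eq[symmetric], simp_all)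
qed

lemma arises_from_groupoid: "arises_from_internal_groupoid C C1 C2 \<theta> \<phi> m"
proof -
  have "hom C (m \<cdot> \<theta>) C2 C1"
    unfolding hom_def by simp
  then have "is_pullback C q1 ((m \<cdot> \<theta>) \<cdot> q2) (d \<cdot> (m \<cdot> \<theta>)) c"
    using P.pullback_pasting[OF q1 q2 _ T.commutes triples_pullback] by simp
  then have "internal_groupoid C C0 C1 C2 d c e m (m \<cdot> \<phi>) (m \<cdot> \<theta>) inverse_map"
    using q1 q2 by (intro E.internal_groupoidI) (auto simp: hom_def)
  then show ?thesis
    unfolding arises_from_internal_groupoid_def using \<theta>_shear \<phi>_shear by blast
qed

end

lemma arises_if_link_conditions:
  assumes "category C" "hom C m C2 C1" "hom C \<theta> C2 C2" "hom C \<phi> C2 C2"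
    "Cmp C \<theta> \<theta> = Idn C C2" "Cmp C \<phi> \<phi> = Idn C C2"
    and "link_unit_sections C C1 C2 \<theta> \<phi> m" "bicartesian_cospan C C1 (Cmp C m \<phi>) (Cmp C m \<theta>)"
    "link_associative C C2 \<theta> \<phi> m"
  shows "arises_from_internal_groupoid C C1 C2 \<theta> \<phi> m"
  using assms unfolding link_unit_sections_def bicartesian_cospan_def link_associative_def
  by (elim exE conjE, intro link_with_conditions.arises_from_groupoid link_with_conditions.intro
      category_ctx.intro link_with_conditions_axioms.intro)

theorem theorem5p3:
  fixes C :: "('o, 'm) cat" and C1 C2 :: 'o and \<theta> \<phi> m :: 'm
  assumes cat: "category C"
    and link: "involutive_2_link C C2 C1 \<theta> \<phi> m"
  shows "(\<exists>C0 d c e p1 p2 i. internal_groupoid C C0 C1 C2 d c e m p1 p2 i \<and>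
            \<theta> = pairing C p1 p2 (Cmp C i p1) m \<and>
            \<phi> = pairing C p1 p2 m (Cmp C i p2))
    \<longleftrightarrow>
    ( jointly_mono C C2 [m, Cmp C m \<theta>] \<and> jointly_mono C C2 [m, Cmp C m \<phi>]
    \<and> (\<exists>e1 e2. hom C e1 C1 C2 \<and> hom C e2 C1 C2 \<and>
         Cmp C m e1 = Idn C C1 \<and> Cmp C m e2 = Idn C C1 \<and>
         Cmp C \<theta> e2 = e2 \<and> Cmp C \<phi> e1 = e1 \<and>
         Cmp C m (Cmp C \<theta> (Cmp C \<phi> e2)) = Cmp C m (Cmp C \<phi> (Cmp C \<theta> e1)) \<and>
         Cmp C (Cmp C m (Cmp C \<theta> e1)) (Cmp C m \<phi>)
           = Cmp C (Cmp C m (Cmp C \<phi> e2)) (Cmp C m \<theta>) \<and>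
         Cmp C (Cmp C m (Cmp C \<theta> e1)) m = Cmp C (Cmp C m (Cmp C \<theta> e1)) (Cmp C m \<theta>) \<and>
         Cmp C (Cmp C m (Cmp C \<phi> e2)) m = Cmp C (Cmp C m (Cmp C \<phi> e2)) (Cmp C m \<phi>))
    \<and> (\<exists>C0 d c. hom C d C1 C0 \<and> hom C c C1 C0 \<and>
         is_pullback C (Cmp C m \<phi>) (Cmp C m \<theta>) d c \<and>
         is_pushout C (Cmp C m \<phi>) (Cmp C m \<theta>) d c)
    \<and> (\<exists>C3 q1 q2. hom C q1 C3 C2 \<and> hom C q2 C3 C2 \<and>
         is_pullback C q1 q2 (Cmp C m \<theta>) (Cmp C m \<phi>) \<and>
         is_pushout C q1 q2 (Cmp C m \<theta>) (Cmp C m \<phi>) \<and>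
         (\<exists>m1 m2. hom C m1 C3 C2 \<and> hom C m2 C3 C2 \<and>
            Cmp C (Cmp C m \<phi>) m1 = Cmp C m q1 \<and> Cmp C (Cmp C m \<theta>) m1 = Cmp C (Cmp C m \<theta>) q2 \<and>
            Cmp C (Cmp C m \<phi>) m2 = Cmp C (Cmp C m \<phi>) q1 \<and> Cmp C (Cmp C m \<theta>) m2 = Cmp C m q2 \<and>
            Cmp C m m1 = Cmp C m m2)))"
proof -
  have involutions: "hom C m C2 C1" "hom C \<theta> C2 C2" "hom C \<phi> C2 C2"
    "Cmp C \<theta> \<theta> = Idn C C2" "Cmp C \<phi> \<phi> = Idn C C2"
    using link unfolding involutive_2_link_def by auto
  have "arises_from_internal_groupoid C C1 C2 \<theta> \<phi> m \<longleftrightarrow>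
      jointly_mono C C2 [m, Cmp C m \<theta>] \<and> jointly_mono C C2 [m, Cmp C m \<phi>] \<and>
      link_unit_sections C C1 C2 \<theta> \<phi> m \<and> bicartesian_cospan C C1 (Cmp C m \<phi>) (Cmp C m \<theta>) \<and>
      link_associative C C2 \<theta> \<phi> m"
    using link_conditions_if_arises[OF cat] arises_if_link_conditions[OF cat involutions] by blast
  then show ?thesis
    unfolding arises_from_internal_groupoid_def link_unit_sections_def bicartesian_cospan_def
      link_associative_def .
qed

end
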